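(* Let $n\ge 1$. Any two maximal Diophantine graphs of order $n$, $(G_1,f_1)$ and $(G_2,f_2)$ with Diophantine labelings $f_1,f_2$, are labeling isomorphic: there is a graph isomorphism $\varphi:V(G_1)\to V(G_2)$ with $f_1=f_2\circ\varphi$.
   Context: A graph $G$ with $n$ vertices is Diophantine if there is a bijection $f:V(G)\to\{1,2,\dots,n\}$ (a Diophantine labeling) such that $\gcd(f(u),f(v))$ divides $n$ for every edge $uv$. A maximal Diophantine graph of order $n$ is a Diophantine graph with $n$ vertices such that adding any new edge yields a graph that is not Diophantine. *)

theory Defs
  imports Main
begin

definition simple_graph :: "'a set \<Rightarrow> ('a \<Rightarrow> 'a \<Rightarrow> bool) \<Rightarrow> bool" where
  "simple_graph V E \<longleftrightarrow> finite V \<and>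
     (\<forall>u v. E u v \<longrightarrow> u \<in> V \<and> v \<in> V) \<and>
     (\<forall>u v. E u v \<longrightarrow> E v u) \<and> (\<forall>u. \<not> E u u)"

definition diophantine_labeling :: "'a set \<Rightarrow> ('a \<Rightarrow> 'a \<Rightarrow> bool) \<Rightarrow> ('a \<Rightarrow> nat) \<Rightarrow> bool" where
  "diophantine_labeling V E f \<longleftrightarrow>
     bij_betw f V {1..card V} \<and>
     (\<forall>u v. E u v \<longrightarrow> gcd (f u) (f v) dvd card V)"

definition diophantine :: "'a set \<Rightarrow> ('a \<Rightarrow> 'a \<Rightarrow> bool) \<Rightarrow> bool" where
  "diophantine V E \<longleftrightarrow> (\<exists>f. diophantine_labeling V E f)"

definition add_edge :: "('a \<Rightarrow> 'a \<Rightarrow> bool) \<Rightarrow> 'a \<Rightarrow> 'a \<Rightarrow> ('a \<Rightarrow> 'a \<Rightarrow> bool)" where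
  "add_edge E u v = (\<lambda>x y. E x y \<or> (x = u \<and> y = v) \<or> (x = v \<and> y = u))"

definition maximal_diophantine :: "nat \<Rightarrow> 'a set \<Rightarrow> ('a \<Rightarrow> 'a \<Rightarrow> bool) \<Rightarrow> bool" where
  "maximal_diophantine n V E \<longleftrightarrow>
     simple_graph V E \<and> card V = n \<and> diophantine V E \<and>
     (\<forall>u\<in>V. \<forall>v\<in>V. u \<noteq> v \<and> \<not> E u v \<longrightarrow> \<not> diophantine V (add_edge E u v))"

end

theory Submission
  imports Defs
begin

text \<open>In a maximal Diophantine graph every Diophantine labeling f determines the edges:
  distinct u, v are adjacent iff gcd (f u) (f v) divides n, because otherwise adding the edge uv
  would leave f Diophantine. Hence two such graphs of the same order are isomorphic via
  the map that sends each vertex to the vertex carrying the same label.\<close>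

lemma diophantine_labeling_add_edge:
  assumes "diophantine_labeling V E f" and "gcd (f u) (f v) dvd card V"
  shows "diophantine_labeling V (add_edge E u v) f"
  using assms unfolding diophantine_labeling_def add_edge_def
  by (auto simp: gcd.commute)

lemma maximal_diophantine_edge_iff:
  assumes max: "maximal_diophantine n V E" and lab: "diophantine_labeling V E f"
    and u: "u \<in> V" and v: "v \<in> V"
  shows "E u v \<longleftrightarrow> u \<noteq> v \<and> gcd (f u) (f v) dvd n"
proof
  have "simple_graph V E" and card: "card V = n"
    using max by (auto simp: maximal_diophantine_def)
  then show "E u v \<Longrightarrow> u \<noteq> v \<and> gcd (f u) (f v) dvd n"
    using lab by (auto simp: simple_graph_def diophantine_labeling_def)
  assume uv: "u \<noteq> v \<and> gcd (f u) (f v) dvd n"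
  show "E u v"
  proof (rule ccontr)
    assume "\<not> E u v"
    moreover have "diophantine V (add_edge E u v)"
      using diophantine_labeling_add_edge[OF lab] uv card by (auto simp: diophantine_def)
    ultimately show False
      using max u v uv by (auto simp: maximal_diophantine_def)
  qed
qed

lemma bij_betw_common_codomain:
  assumes f: "bij_betw f A C" and g: "bij_betw g B C"
  obtains \<phi> where "bij_betw \<phi> A B" and "\<And>x. x \<in> A \<Longrightarrow> g (\<phi> x) = f x"
proof
  have "bij_betw (the_inv_into B g) C B"
    using g by (rule bij_betw_the_inv_into)
  with f show "bij_betw (the_inv_into B g \<circ> f) A B"
    by (rule bij_betw_trans)
  fix x assume "x \<in> A"
  then have "f x \<in> C" using f by (auto simp: bij_betw_def)
  then show "g ((the_inv_into B g \<circ> f) x) = f x"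
    using g by (simp add: bij_betw_def f_the_inv_into_f)
qed

theorem mainTheorem2:
  fixes V1 :: "'a set" and E1 :: "'a \<Rightarrow> 'a \<Rightarrow> bool" and f1 :: "'a \<Rightarrow> nat"
    and V2 :: "'b set" and E2 :: "'b \<Rightarrow> 'b \<Rightarrow> bool" and f2 :: "'b \<Rightarrow> nat"
    and n :: nat
  assumes "n \<ge> 1"
    and "maximal_diophantine n V1 E1" and "diophantine_labeling V1 E1 f1"
    and "maximal_diophantine n V2 E2" and "diophantine_labeling V2 E2 f2"
  shows "\<exists>\<phi>. bij_betw \<phi> V1 V2 \<and>
           (\<forall>u\<in>V1. \<forall>v\<in>V1. E1 u v \<longleftrightarrow> E2 (\<phi> u) (\<phi> v)) \<and>
           (\<forall>v\<in>V1. f1 v = f2 (\<phi> v))"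
proof -
  have "bij_betw f1 V1 {1..n}" and "bij_betw f2 V2 {1..n}"
    using assms(2-5) by (auto simp: maximal_diophantine_def diophantine_labeling_def)
  then obtain \<phi> where \<phi>: "bij_betw \<phi> V1 V2" and labels: "\<And>v. v \<in> V1 \<Longrightarrow> f2 (\<phi> v) = f1 v"
    by (rule bij_betw_common_codomain) blast
  have "E1 u v \<longleftrightarrow> E2 (\<phi> u) (\<phi> v)" if u: "u \<in> V1" and v: "v \<in> V1" for u v
  proof -
    have "\<phi> u \<in> V2" "\<phi> v \<in> V2" and "\<phi> u = \<phi> v \<longleftrightarrow> u = v"
      using \<phi> u v by (auto simp: bij_betw_def inj_on_def)
    then show ?thesis
      using maximal_diophantine_edge_iff[OF assms(2,3) u v]
        maximal_diophantine_edge_iff[OF assms(4,5)] labels u v by simp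
  qed
  with \<phi> labels show ?thesis by metis
qed

end
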